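(* Let $a\in\mathbb{R}$, $\tau>0$, $\omega>0$, and let $\mathcal L$ be as in the context. The boundary value problem for $g:[0,1]\to\mathbb{R}^{1\times2}$ $$g''(x)=g(x)(G_c-aE)-\mathcal L(x)g(0),\quad g'(0)=0,\quad g'(1)=-\gamma_ce^{-G_c\tau}$$ admits a unique solution $g\in H^2((0,1);\mathbb{R}^{1\times2})$.
   Context: $G_c=\begin{bmatrix}0&\omega\\-\omega&0\end{bmatrix}$, $E$ is the $2\times2$ identity matrix, $\gamma_c=[1,0]$. $\phi_0\equiv1$, $\phi_n(x)=\sqrt2\cos(n\pi x)$ ($n\ge1$), $\mathcal L(x)=\sum_{n=0}^N\ell_n\phi_n(x)$, where for some $\delta>0$, $N\in\mathbb{N}$ satisfies $a-(n\pi)^2<-\delta$ for all $n>N$, and $L=[\ell_0\ \ldots\ \ell_N]^\top\in\mathbb{R}^{N+1}$ is an observer gain chosen so that there is a positive-definite $Q$ with $Q(A+LC)+(A+LC)^\top Q<-2\delta Q$, where $A=\mathrm{diag}(a-(n\pi)^2)_{n=0}^N$ and $C=[1\ \sqrt2\ \ldots\ \sqrt2]\in\mathbb{R}^{1\times(N+1)}$. *)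

theory Defs
  imports "HOL-Analysis.Analysis"
begin

fun mpow :: "real^'n^'n \<Rightarrow> nat \<Rightarrow> real^'n^'n" where
  "mpow M 0 = mat 1"
| "mpow M (Suc n) = M ** mpow M n"

definition mexp :: "real^'n^'n \<Rightarrow> real^'n^'n" where
  "mexp M = (\<Sum>n. (1 / fact n) *\<^sub>R mpow M n)"

definition Gc :: "real \<Rightarrow> real^2^2" where
  "Gc \<omega> = vector [vector [0, \<omega>], vector [- \<omega>, 0]]"

definition gamma_c :: "real^2" where
  "gamma_c = vector [1, 0]"

definition phi :: "nat \<Rightarrow> real \<Rightarrow> real" where
  "phi n x = (if n = 0 then 1 else sqrt 2 * cos (real n * pi * x))"

definition Lfun :: "(nat \<Rightarrow> real) \<Rightarrow> nat \<Rightarrow> real \<Rightarrow> real" where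
  "Lfun l N x = (\<Sum>n\<le>N. l n * phi n x)"

text \<open>(N+1)x(N+1) matrices as functions nat => nat => real, indices 0..N.\<close>

definition Amat :: "real \<Rightarrow> nat \<Rightarrow> nat \<Rightarrow> real" where
  "Amat a i j = (if i = j then a - (real i * pi)^2 else 0)"

definition Cvec :: "nat \<Rightarrow> real" where
  "Cvec j = (if j = 0 then 1 else sqrt 2)"

definition ALC :: "real \<Rightarrow> (nat \<Rightarrow> real) \<Rightarrow> nat \<Rightarrow> nat \<Rightarrow> real" where
  "ALC a l i j = Amat a i j + l i * Cvec j"

definition mmul :: "nat \<Rightarrow> (nat \<Rightarrow> nat \<Rightarrow> real) \<Rightarrow> (nat \<Rightarrow> nat \<Rightarrow> real) \<Rightarrow> nat \<Rightarrow> nat \<Rightarrow> real" where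
  "mmul N M P i j = (\<Sum>k\<le>N. M i k * P k j)"

definition mtrans :: "(nat \<Rightarrow> nat \<Rightarrow> real) \<Rightarrow> nat \<Rightarrow> nat \<Rightarrow> real" where
  "mtrans M i j = M j i"

definition posdef :: "nat \<Rightarrow> (nat \<Rightarrow> nat \<Rightarrow> real) \<Rightarrow> bool" where
  "posdef N M \<longleftrightarrow> (\<forall>i\<le>N. \<forall>j\<le>N. M i j = M j i) \<and>
     (\<forall>x::nat \<Rightarrow> real. (\<exists>i\<le>N. x i \<noteq> 0) \<longrightarrow> (\<Sum>i\<le>N. \<Sum>j\<le>N. x i * M i j * x j) > 0)"

text \<open>Q(A+LC) + (A+LC)^T Q < -2 delta Q, i.e. -2 delta Q - (Q(A+LC) + (A+LC)^T Q) is positive definite.\<close>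
definition lyap_ok :: "real \<Rightarrow> nat \<Rightarrow> (nat \<Rightarrow> real) \<Rightarrow> real \<Rightarrow> (nat \<Rightarrow> nat \<Rightarrow> real) \<Rightarrow> bool" where
  "lyap_ok a N l \<delta> Q \<longleftrightarrow> posdef N Q \<and>
     posdef N (\<lambda>i j. - 2 * \<delta> * Q i j
        - (mmul N Q (ALC a l) i j + mmul N (mtrans (ALC a l)) Q i j))"

text \<open>g (continuous representative) belongs to H^2(0,1) with first derivative g1
  and weak second derivative g2: g is C^1 on [0,1] with derivative g1, g1 is the
  indefinite integral of g2, and g2 is square integrable on (0,1).\<close>
definition H2_on01 :: "(real \<Rightarrow> real^2) \<Rightarrow> (real \<Rightarrow> real^2) \<Rightarrow> (real \<Rightarrow> real^2) \<Rightarrow> bool" where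
  "H2_on01 g g1 g2 \<longleftrightarrow>
     (\<forall>x\<in>{0..1}. (g has_vector_derivative g1 x) (at x within {0..1})) \<and>
     (\<forall>x\<in>{0..1}. g1 x = g1 0 + integral {0..x} g2) \<and>
     g2 \<in> borel_measurable (lebesgue_on {0..1}) \<and>
     integrable (lebesgue_on {0..1}) (\<lambda>x. (norm (g2 x))^2)"

definition is_solution :: "real \<Rightarrow> real \<Rightarrow> real \<Rightarrow> (nat \<Rightarrow> real) \<Rightarrow> nat \<Rightarrow> (real \<Rightarrow> real^2) \<Rightarrow> bool" where
  "is_solution a \<tau> \<omega> l N g \<longleftrightarrow>
     (\<exists>g1 g2. H2_on01 g g1 g2 \<and>
        (AE x in lebesgue_on {0..1}. g2 x = g x v* (Gc \<omega> - a *\<^sub>R mat 1) - Lfun l N x *\<^sub>R g 0) \<and>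
        g1 0 = 0 \<and>
        g1 1 = - (gamma_c v* mexp (- (\<tau> *\<^sub>R Gc \<omega>))))"

end

theory Submission
  imports Defs
begin

(* Identify a row vector (x, y) with x + iy.  Then g (G_c - aE) becomes multiplication by
   m = -a + i omega, and the problem is the scalar nonlocal problem
   z'' = m z - L(x) z(0), z'(0) = 0, z'(1) = beta.
   Since phi_n'' = -(n pi)^2 phi_n, the function Psi = sum_n l_n / (m + (n pi)^2) phi_n satisfies
   Psi'' = m Psi - L and Psi'(0) = Psi'(1) = 0, so w = z - z(0) Psi solves w'' = m w, w'(0) = 0,
   w'(1) = beta, which forces w = beta cosh(sqrt m x) / (sqrt m sinh (sqrt m)).  Evaluating
   z = w + z(0) Psi at 0 determines z(0) uniquely iff Psi(0) <> 1.  If Psi(0) = 1, the vector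
   (l_n / (m + (n pi)^2))_n would be an eigenvector of A + LC for the imaginary eigenvalue
   i omega, which the Lyapunov inequality rules out. *)

definition bilin :: "nat \<Rightarrow> (nat \<Rightarrow> nat \<Rightarrow> real) \<Rightarrow> (nat \<Rightarrow> real) \<Rightarrow> (nat \<Rightarrow> real) \<Rightarrow> real" where
  "bilin N M x y = (\<Sum>i\<le>N. \<Sum>j\<le>N. x i * M i j * y j)"

definition mvmul :: "nat \<Rightarrow> (nat \<Rightarrow> nat \<Rightarrow> real) \<Rightarrow> (nat \<Rightarrow> real) \<Rightarrow> nat \<Rightarrow> real" where
  "mvmul N M y i = (\<Sum>j\<le>N. M i j * y j)"

lemma mtrans_mtrans [simp]: "mtrans (mtrans M) = M"
  by (simp add: mtrans_def fun_eq_iff)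

lemma mtrans_mmul: "mtrans (mmul N A B) = mmul N (mtrans B) (mtrans A)"
  by (simp add: mtrans_def mmul_def fun_eq_iff mult.commute)

lemma bilin_mtrans: "bilin N (mtrans M) x y = bilin N M y x"
  unfolding bilin_def mtrans_def by (subst sum.swap) (simp add: mult_ac)

lemma bilin_mmul: "bilin N (mmul N M B) x y = bilin N M x (mvmul N B y)"
proof -
  have "bilin N (mmul N M B) x y = (\<Sum>i\<le>N. \<Sum>j\<le>N. \<Sum>k\<le>N. x i * M i k * (B k j * y j))"
    unfolding bilin_def mmul_def by (simp add: sum_distrib_left sum_distrib_right mult_ac)
  also have "\<dots> = (\<Sum>i\<le>N. \<Sum>k\<le>N. \<Sum>j\<le>N. x i * M i k * (B k j * y j))"
    by (rule sum.cong[OF refl], rule sum.swap)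
  finally show ?thesis
    by (simp add: bilin_def mvmul_def sum_distrib_left)
qed

lemma bilin_mmul_mtrans: "bilin N (mmul N (mtrans B) M) x y = bilin N M (mvmul N B x) y"
  by (metis bilin_mmul bilin_mtrans mtrans_mmul mtrans_mtrans)

lemma bilin_lyapunov_matrix:
  "bilin N (\<lambda>i j. c * Q i j - (mmul N Q B i j + mmul N (mtrans B) Q i j)) y y
     = c * bilin N Q y y - bilin N Q y (mvmul N B y) - bilin N Q (mvmul N B y) y"
proof -
  have "bilin N (\<lambda>i j. c * Q i j - (mmul N Q B i j + mmul N (mtrans B) Q i j)) y y
     = c * bilin N Q y y - bilin N (mmul N Q B) y y - bilin N (mmul N (mtrans B) Q) y y"
    unfolding bilin_def
    by (simp add: algebra_simps sum_subtractf sum.distrib sum_distrib_left)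
  then show ?thesis by (simp only: bilin_mmul_mtrans bilin_mmul[of N Q B])
qed

lemma bilin_scale_left: "\<forall>i\<le>N. x i = c * x' i \<Longrightarrow> bilin N M x y = c * bilin N M x' y"
  by (simp add: bilin_def sum_distrib_left mult.assoc)

lemma bilin_scale_right: "\<forall>j\<le>N. y j = c * y' j \<Longrightarrow> bilin N M x y = c * bilin N M x y'"
  by (simp add: bilin_def sum_distrib_left mult_ac)

lemma posdef_bilin_pos: "posdef N M \<Longrightarrow> \<exists>i\<le>N. y i \<noteq> 0 \<Longrightarrow> 0 < bilin N M y y"
  by (simp add: posdef_def bilin_def)

lemma posdef_bilin_nonneg:
  assumes "posdef N M" shows "0 \<le> bilin N M y y"
proof (cases "\<exists>i\<le>N. y i \<noteq> 0")
  case True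
  then show ?thesis using posdef_bilin_pos[OF assms] by (simp add: less_imp_le)
next
  case False
  then show ?thesis by (simp add: bilin_def)
qed

lemma lyapunov_no_imaginary_eigenvector:
  fixes B Q :: "nat \<Rightarrow> nat \<Rightarrow> real" and x :: "nat \<Rightarrow> complex"
  assumes Q: "posdef N Q"
    and P: "posdef N (\<lambda>i j. - 2 * \<delta> * Q i j - (mmul N Q B i j + mmul N (mtrans B) Q i j))"
    and "0 \<le> \<delta>"
    and eig: "\<forall>k\<le>N. (\<Sum>j\<le>N. of_real (B k j) * x j) = \<i> * of_real \<omega> * x k"
  shows "\<forall>k\<le>N. x k = 0"
proof (rule ccontr)
  define u where "u k = Re (x k)" for k
  define v where "v k = Im (x k)" for k
  let ?P = "\<lambda>i j. - 2 * \<delta> * Q i j - (mmul N Q B i j + mmul N (mtrans B) Q i j)"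
  have Bu: "\<forall>k\<le>N. mvmul N B u k = - \<omega> * v k" and Bv: "\<forall>k\<le>N. mvmul N B v k = \<omega> * u k"
    using arg_cong[where f = Re, OF eig[rule_format]] arg_cong[where f = Im, OF eig[rule_format]]
    by (simp_all add: mvmul_def u_def v_def)
  \<comment> \<open>The cross terms of B u = -\<omega> v and B v = \<omega> u cancel in the sum of the two forms.\<close>
  have "bilin N ?P u u + bilin N ?P v v = - 2 * \<delta> * (bilin N Q u u + bilin N Q v v)"
    unfolding bilin_lyapunov_matrix
    by (simp add: bilin_scale_left[OF Bu] bilin_scale_right[OF Bu]
        bilin_scale_left[OF Bv] bilin_scale_right[OF Bv] algebra_simps)
  also have "\<dots> \<le> 0"
    using \<open>0 \<le> \<delta>\<close> posdef_bilin_nonneg[OF Q, of u] posdef_bilin_nonneg[OF Q, of v] by simp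
  finally have "bilin N ?P u u + bilin N ?P v v \<le> 0" .
  moreover assume "\<not> (\<forall>k\<le>N. x k = 0)"
  then have "(\<exists>k\<le>N. u k \<noteq> 0) \<or> (\<exists>k\<le>N. v k \<noteq> 0)"
    by (auto simp: u_def v_def complex_eq_iff)
  then have "0 < bilin N ?P u u + bilin N ?P v v"
    using posdef_bilin_pos[OF P] posdef_bilin_nonneg[OF P] by (meson add_pos_nonneg add_nonneg_pos)
  ultimately show False by simp
qed

lemma cosh_scaled_has_vector_derivative:
  fixes k :: complex
  shows "((\<lambda>x::real. cosh (k * x)) has_vector_derivative k * sinh (k * x)) (at x within S)"
proof -
  have "((\<lambda>t. cosh (k * t)) has_field_derivative sinh (k * x) * k) (at (of_real x))"
    by (auto intro!: derivative_eq_intros)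
  from has_vector_derivative_real_field[OF this] show ?thesis by (simp add: mult.commute)
qed

lemma sinh_scaled_has_vector_derivative:
  fixes k :: complex
  shows "((\<lambda>x::real. sinh (k * x)) has_vector_derivative k * cosh (k * x)) (at x within S)"
proof -
  have "((\<lambda>t. sinh (k * t)) has_field_derivative cosh (k * x) * k) (at (of_real x))"
    by (auto intro!: derivative_eq_intros)
  from has_vector_derivative_real_field[OF this] show ?thesis by (simp add: mult.commute)
qed

lemma has_vector_derivative_zero_imp_const:
  fixes f :: "real \<Rightarrow> 'a::real_normed_vector"
  assumes "convex S" "0 \<in> S" "\<forall>x\<in>S. (f has_vector_derivative 0) (at x within S)"
  shows "\<forall>x\<in>S. f x = f 0"
  using has_vector_derivative_zero_constant[of S f] assms by metis

lemma cosh_ivp_unique: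
  fixes w w' :: "real \<Rightarrow> complex" and k :: complex
  assumes "k \<noteq> 0" "convex S" "0 \<in> S"
    and w: "\<forall>x\<in>S. (w has_vector_derivative w' x) (at x within S)"
    and w': "\<forall>x\<in>S. (w' has_vector_derivative k\<^sup>2 * w x) (at x within S)"
    and "w' 0 = 0"
  shows "\<forall>x\<in>S. w x = w 0 * cosh (k * x) \<and> w' x = k * w 0 * sinh (k * x)"
proof -
  \<comment> \<open>Wronskian-type combinations of w with cosh (k x) and sinh (k x); the ODE makes them constant.\<close>
  define p where "p x = w' x * cosh (k * x) - k * w x * sinh (k * x)" for x
  define q where "q x = w' x * sinh (k * x) - k * w x * cosh (k * x)" for x
  have "\<forall>x\<in>S. (p has_vector_derivative 0) (at x within S)"
  proof
    fix x assume "x \<in> S"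
    have "(p has_vector_derivative
        (w' x * (k * sinh (k * x)) + k\<^sup>2 * w x * cosh (k * x))
        - (k * w x * (k * cosh (k * x)) + k * w' x * sinh (k * x))) (at x within S)"
      unfolding p_def using w w' \<open>x \<in> S\<close>
      by (intro derivative_intros cosh_scaled_has_vector_derivative
          sinh_scaled_has_vector_derivative) auto
    then show "(p has_vector_derivative 0) (at x within S)"
      by (simp add: power2_eq_square algebra_simps)
  qed
  then have "\<forall>x\<in>S. p x = p 0"
    by (rule has_vector_derivative_zero_imp_const[OF \<open>convex S\<close> \<open>0 \<in> S\<close>])
  then have p: "\<forall>x\<in>S. p x = 0"
    using \<open>w' 0 = 0\<close> by (simp add: p_def)
  have "\<forall>x\<in>S. (q has_vector_derivative 0) (at x within S)"
  proof
    fix x assume "x \<in> S"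
    have "(q has_vector_derivative
        (w' x * (k * cosh (k * x)) + k\<^sup>2 * w x * sinh (k * x))
        - (k * w x * (k * sinh (k * x)) + k * w' x * cosh (k * x))) (at x within S)"
      unfolding q_def using w w' \<open>x \<in> S\<close>
      by (intro derivative_intros cosh_scaled_has_vector_derivative
          sinh_scaled_has_vector_derivative) auto
    then show "(q has_vector_derivative 0) (at x within S)"
      by (simp add: power2_eq_square algebra_simps)
  qed
  then have "\<forall>x\<in>S. q x = q 0"
    by (rule has_vector_derivative_zero_imp_const[OF \<open>convex S\<close> \<open>0 \<in> S\<close>])
  then have q: "\<forall>x\<in>S. q x = - k * w 0"
    using \<open>w' 0 = 0\<close> by (simp add: q_def)
  show ?thesis
  proof
    fix x assume "x \<in> S"
    have "p x * sinh (k * x) - q x * cosh (k * x)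
        = k * w x * (cosh (k * x) ^ 2 - sinh (k * x) ^ 2)"
     and "p x * cosh (k * x) - q x * sinh (k * x)
        = w' x * (cosh (k * x) ^ 2 - sinh (k * x) ^ 2)"
      by (simp_all add: p_def q_def power2_eq_square algebra_simps)
    then show "w x = w 0 * cosh (k * x) \<and> w' x = k * w 0 * sinh (k * x)"
      using p q \<open>x \<in> S\<close> \<open>k \<noteq> 0\<close> by (simp add: hyperbolic_pythagoras)
  qed
qed

definition dphi :: "nat \<Rightarrow> real \<Rightarrow> real" where
  "dphi n x = - sqrt 2 * (real n * pi) * sin (real n * pi * x)"

lemma phi_has_real_derivative: "(phi n has_real_derivative dphi n x) (at x within S)"
proof (cases "n = 0")
  case True
  then have "phi n = (\<lambda>x. 1)" by (simp add: phi_def fun_eq_iff)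
  then show ?thesis using True by (simp add: dphi_def)
next
  case False
  then have "phi n = (\<lambda>x. sqrt 2 * cos (real n * pi * x))" by (simp add: phi_def fun_eq_iff)
  then show ?thesis by (auto intro!: derivative_eq_intros simp: dphi_def)
qed

lemma dphi_has_real_derivative:
  "(dphi n has_real_derivative - (real n * pi)\<^sup>2 * phi n x) (at x within S)"
  unfolding dphi_def[abs_def]
  by (auto intro!: derivative_eq_intros simp: phi_def power2_eq_square)

lemma phi_at_0: "phi n 0 = Cvec n"
  by (simp add: phi_def Cvec_def)

lemma dphi_at_0: "dphi n 0 = 0" and dphi_at_1: "dphi n 1 = 0"
  by (simp_all add: dphi_def)

lemma continuous_on_Lfun: "continuous_on S (Lfun l N)"
proof -
  have "continuous_on S (phi n)" for n
    using phi_has_real_derivative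
    by (intro continuous_on_vector_derivative) (simp add: has_real_derivative_iff_has_vector_derivative)
  then show ?thesis
    unfolding Lfun_def[abs_def] by (intro continuous_intros)
qed

definition modal_sum :: "complex \<Rightarrow> (nat \<Rightarrow> real) \<Rightarrow> nat \<Rightarrow> (nat \<Rightarrow> real \<Rightarrow> real) \<Rightarrow> real \<Rightarrow> complex" where
  "modal_sum m l N f x = (\<Sum>n\<le>N. of_real (l n) / (m + of_real ((real n * pi)\<^sup>2)) * of_real (f n x))"

lemma modal_sum_phi_has_vector_derivative:
  "(modal_sum m l N phi has_vector_derivative modal_sum m l N dphi x) (at x within S)"
  unfolding modal_sum_def[abs_def]
  by (intro derivative_intros phi_has_real_derivative)

lemma modal_sum_dphi_has_vector_derivative:
  assumes "\<forall>n\<le>N. m + of_real ((real n * pi)\<^sup>2) \<noteq> 0"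
  shows "(modal_sum m l N dphi has_vector_derivative
           m * modal_sum m l N phi x - of_real (Lfun l N x)) (at x within S)"
proof -
  let ?c = "\<lambda>n. of_real (l n) / (m + of_real ((real n * pi)\<^sup>2))"
  have "(modal_sum m l N dphi has_vector_derivative
          (\<Sum>n\<le>N. ?c n * of_real (- (real n * pi)\<^sup>2 * phi n x))) (at x within S)"
    unfolding modal_sum_def[abs_def]
    by (intro derivative_intros dphi_has_real_derivative)
  moreover have "(\<Sum>n\<le>N. ?c n * of_real (- (real n * pi)\<^sup>2 * phi n x))
      = (\<Sum>n\<le>N. m * (?c n * of_real (phi n x)) - of_real (l n * phi n x))"
  proof (rule sum.cong[OF refl])
    fix n assume "n \<in> {..N}"
    then have "of_real (l n * phi n x) = ?c n * (m + of_real ((real n * pi)\<^sup>2)) * of_real (phi n x)"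
      using assms by simp
    then show "?c n * of_real (- (real n * pi)\<^sup>2 * phi n x)
        = m * (?c n * of_real (phi n x)) - of_real (l n * phi n x)"
      by (simp add: algebra_simps add_divide_distrib)
  qed
  then have "(\<Sum>n\<le>N. ?c n * of_real (- (real n * pi)\<^sup>2 * phi n x))
      = m * modal_sum m l N phi x - of_real (Lfun l N x)"
    by (simp add: modal_sum_def Lfun_def sum_distrib_left sum_subtractf)
  ultimately show ?thesis by simp
qed

lemma modal_sum_dphi_at_0: "modal_sum m l N dphi 0 = 0"
  and modal_sum_dphi_at_1: "modal_sum m l N dphi 1 = 0"
  by (simp_all add: modal_sum_def dphi_at_0 dphi_at_1)

lemma add_of_real_nonzero_if_Im_nonzero: "Im m \<noteq> 0 \<Longrightarrow> m + of_real r \<noteq> 0"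
  by (auto simp: complex_eq_iff)

lemma sinh_csqrt_nonzero:
  assumes "Im m \<noteq> 0"
  shows "sinh (csqrt m) \<noteq> 0"
proof
  define k where "k = csqrt m"
  assume "sinh (csqrt m) = 0"
  then have "exp k \<in> {1, -1}"
    by (simp add: k_def sinh_zero_iff)
  then have "exp (Re k) = 1"
    by (metis empty_iff insert_iff norm_exp_eq_Re norm_minus_cancel norm_one)
  then have "Im (k\<^sup>2) = 0"
    by (simp add: power2_eq_square)
  with assms show False
    by (simp add: k_def)
qed

definition nonlocal_bvp ::
    "complex \<Rightarrow> (real \<Rightarrow> real) \<Rightarrow> complex \<Rightarrow> (real \<Rightarrow> complex) \<Rightarrow> (real \<Rightarrow> complex) \<Rightarrow> bool" where
  "nonlocal_bvp m L \<beta> z z' \<longleftrightarrow>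
     (\<forall>x\<in>{0..1}. (z has_vector_derivative z' x) (at x within {0..1}) \<and>
        (z' has_vector_derivative m * z x - of_real (L x) * z 0) (at x within {0..1})) \<and>
     z' 0 = 0 \<and> z' 1 = \<beta>"

definition nonlocal_bvp_sol :: "complex \<Rightarrow> (nat \<Rightarrow> real) \<Rightarrow> nat \<Rightarrow> complex \<Rightarrow> real \<Rightarrow> complex" where
  "nonlocal_bvp_sol m l N \<beta> x =
     (let k = csqrt m; A = \<beta> / (k * sinh k)
      in A * cosh (k * x) + A / (1 - modal_sum m l N phi 0) * modal_sum m l N phi x)"

lemma nonlocal_bvp_sol_solves:
  assumes "Im m \<noteq> 0" and "modal_sum m l N phi 0 \<noteq> 1"
  shows "\<exists>z'. nonlocal_bvp m (Lfun l N) \<beta> (nonlocal_bvp_sol m l N \<beta>) z'"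
proof -
  define k where "k = csqrt m"
  define A where "A = \<beta> / (k * sinh k)"
  define Z where "Z = A / (1 - modal_sum m l N phi 0)"
  have sol: "nonlocal_bvp_sol m l N \<beta> = (\<lambda>x. A * cosh (k * x) + Z * modal_sum m l N phi x)"
    by (simp add: fun_eq_iff nonlocal_bvp_sol_def Let_def k_def A_def Z_def)
  define z' where "z' x = A * (k * sinh (k * x)) + Z * modal_sum m l N dphi x" for x
  have "k \<noteq> 0" "sinh k \<noteq> 0"
    using assms(1) sinh_csqrt_nonzero by (auto simp: k_def)
  have shift: "\<forall>n\<le>N. m + of_real ((real n * pi)\<^sup>2) \<noteq> 0"
    using add_of_real_nonzero_if_Im_nonzero[OF assms(1)] by blast
  have "Z * (1 - modal_sum m l N phi 0) = A"
    using assms(2) by (simp add: Z_def)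
  then have z0: "A + Z * modal_sum m l N phi 0 = Z"
    by (simp add: algebra_simps)
  have "(nonlocal_bvp_sol m l N \<beta> has_vector_derivative z' x) (at x within {0..1})" for x
    unfolding sol z'_def
    by (intro derivative_intros cosh_scaled_has_vector_derivative modal_sum_phi_has_vector_derivative)
  moreover have "(z' has_vector_derivative
      m * nonlocal_bvp_sol m l N \<beta> x - of_real (Lfun l N x) * nonlocal_bvp_sol m l N \<beta> 0)
      (at x within {0..1})" for x
  proof -
    have "(z' has_vector_derivative
        A * (k * (k * cosh (k * x))) + Z * (m * modal_sum m l N phi x - of_real (Lfun l N x)))
        (at x within {0..1})"
      unfolding z'_def
      by (intro derivative_intros sinh_scaled_has_vector_derivative
          modal_sum_dphi_has_vector_derivative[OF shift])
    moreover have "k * (k * c) = m * c" for c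
      by (metis k_def mult.assoc power2_csqrt power2_eq_square)
    ultimately show ?thesis
      unfolding sol using z0 by (simp add: algebra_simps)
  qed
  moreover have "z' 0 = 0" "z' 1 = \<beta>"
    using \<open>k \<noteq> 0\<close> \<open>sinh k \<noteq> 0\<close>
    by (simp_all add: z'_def A_def modal_sum_dphi_at_0 modal_sum_dphi_at_1)
  ultimately show ?thesis
    unfolding nonlocal_bvp_def by blast
qed

lemma nonlocal_bvp_unique:
  assumes "Im m \<noteq> 0" and "modal_sum m l N phi 0 \<noteq> 1"
    and bvp: "nonlocal_bvp m (Lfun l N) \<beta> z z'"
  shows "\<forall>x\<in>{0..1}. z x = nonlocal_bvp_sol m l N \<beta> x"
proof
  fix x :: real assume "x \<in> {0..1}"
  define k where "k = csqrt m"
  define w where "w x = z x - z 0 * modal_sum m l N phi x" for x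
  define w' where "w' x = z' x - z 0 * modal_sum m l N dphi x" for x
  have "k \<noteq> 0" "sinh k \<noteq> 0"
    using assms(1) sinh_csqrt_nonzero by (auto simp: k_def)
  have k2: "k\<^sup>2 = m"
    by (simp add: k_def)
  have shift: "\<forall>n\<le>N. m + of_real ((real n * pi)\<^sup>2) \<noteq> 0"
    using add_of_real_nonzero_if_Im_nonzero[OF assms(1)] by blast
  have wd: "\<forall>y\<in>{0..1}. (w has_vector_derivative w' y) (at y within {0..1})"
  proof
    fix y :: real assume "y \<in> {0..1}"
    then have "(z has_vector_derivative z' y) (at y within {0..1})"
      using bvp by (simp add: nonlocal_bvp_def)
    then show "(w has_vector_derivative w' y) (at y within {0..1})"
      unfolding w_def[abs_def] w'_def
      by (intro derivative_intros modal_sum_phi_has_vector_derivative)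
  qed
  have wd': "\<forall>y\<in>{0..1}. (w' has_vector_derivative k\<^sup>2 * w y) (at y within {0..1})"
  proof
    fix y :: real assume "y \<in> {0..1}"
    have "(z' has_vector_derivative m * z y - of_real (Lfun l N y) * z 0) (at y within {0..1})"
      using bvp \<open>y \<in> {0..1}\<close> by (simp add: nonlocal_bvp_def)
    then have "(w' has_vector_derivative (m * z y - of_real (Lfun l N y) * z 0)
        - z 0 * (m * modal_sum m l N phi y - of_real (Lfun l N y))) (at y within {0..1})"
      unfolding w'_def[abs_def]
      by (intro derivative_intros modal_sum_dphi_has_vector_derivative[OF shift])
    then show "(w' has_vector_derivative k\<^sup>2 * w y) (at y within {0..1})"
      by (simp add: k2 w_def algebra_simps)
  qed
  have "w' 0 = 0" "w' 1 = \<beta>"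
    using bvp by (simp_all add: nonlocal_bvp_def w'_def modal_sum_dphi_at_0 modal_sum_dphi_at_1)
  have cosh: "\<forall>y\<in>{0..1}. w y = w 0 * cosh (k * y) \<and> w' y = k * w 0 * sinh (k * y)"
    by (rule cosh_ivp_unique[OF \<open>k \<noteq> 0\<close> _ _ wd wd' \<open>w' 0 = 0\<close>]) auto
  have "\<beta> = w 0 * (k * sinh k)"
    using conjunct2[OF cosh[rule_format, of 1]] \<open>w' 1 = \<beta>\<close> by (simp add: mult_ac)
  then have w0: "w 0 = \<beta> / (k * sinh k)"
    using \<open>k \<noteq> 0\<close> \<open>sinh k \<noteq> 0\<close> by (simp add: eq_divide_eq)
  have "w 0 = z 0 * (1 - modal_sum m l N phi 0)"
    by (simp add: w_def algebra_simps)
  then have z0: "z 0 = w 0 / (1 - modal_sum m l N phi 0)"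
    using assms(2) by (simp add: eq_divide_eq)
  have "z x = w x + z 0 * modal_sum m l N phi x"
    by (simp add: w_def)
  also have "\<dots> = w 0 * cosh (k * x) + z 0 * modal_sum m l N phi x"
    using conjunct1[OF cosh[rule_format, OF \<open>x \<in> {0..1}\<close>]] by simp
  also have "\<dots> = nonlocal_bvp_sol m l N \<beta> x"
    unfolding nonlocal_bvp_sol_def Let_def k_def[symmetric] z0 w0 ..
  finally show "z x = nonlocal_bvp_sol m l N \<beta> x" .
qed

definition complex_of_vec :: "real^2 \<Rightarrow> complex" where
  "complex_of_vec v = Complex (v $ 1) (v $ 2)"

definition vec_of_complex :: "complex \<Rightarrow> real^2" where
  "vec_of_complex z = vector [Re z, Im z]"

lemma vec_of_complex_of_vec [simp]: "vec_of_complex (complex_of_vec v) = v"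
  by (simp add: vec_of_complex_def complex_of_vec_def vec_eq_iff forall_2)

lemma complex_of_vec_of_complex [simp]: "complex_of_vec (vec_of_complex z) = z"
  by (simp add: vec_of_complex_def complex_of_vec_def complex_eq_iff)

lemma complex_of_vec_zero [simp]: "complex_of_vec 0 = 0"
  by (simp add: complex_of_vec_def complex_eq_iff)

lemma vec_of_complex_zero [simp]: "vec_of_complex 0 = 0"
  by (metis complex_of_vec_zero vec_of_complex_of_vec)

lemma bounded_linear_complex_of_vec: "bounded_linear complex_of_vec"
  by (auto intro!: linearI simp: linear_conv_bounded_linear[symmetric] complex_of_vec_def complex_eq_iff)

lemma bounded_linear_vec_of_complex: "bounded_linear vec_of_complex"
  by (auto intro!: linearI simp: linear_conv_bounded_linear[symmetric] vec_of_complex_def vec_eq_iff forall_2)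

lemma complex_of_vec_nonlocal_rhs:
  "complex_of_vec (v v* (Gc \<omega> - a *\<^sub>R mat 1) - r *\<^sub>R w)
     = Complex (- a) \<omega> * complex_of_vec v - of_real r * complex_of_vec w"
  by (simp add: complex_of_vec_def vector_matrix_mult_def Gc_def sum_2 mat_def complex_eq_iff
      algebra_simps)

lemma has_vector_derivative_indefinite_integral_ae:
  fixes f f' g :: "real \<Rightarrow> 'a::banach"
  assumes f: "\<forall>x\<in>{a..b}. f x = f a + integral {a..x} f'"
    and ae: "AE x in lebesgue_on {a..b}. f' x = g x"
    and g: "continuous_on {a..b} g"
  shows "\<forall>x\<in>{a..b}. (f has_vector_derivative g x) (at x within {a..b})"
proof
  fix x assume x: "x \<in> {a..b}"
  obtain S where S: "S \<in> null_sets (lebesgue_on {a..b})"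
    and sub: "{y \<in> space (lebesgue_on {a..b}). f' y \<noteq> g y} \<subseteq> S"
    using ae unfolding eventually_ae_filter by auto
  have "{a..b} \<in> sets lebesgue"
    by simp
  then have "negligible S"
    using S null_sets_restrict_space negligible_iff_null_sets by blast
  have eq: "f y = f a + integral {a..y} g" if "y \<in> {a..b}" for y
  proof -
    have "integral {a..y} f' = integral {a..y} g"
      by (rule integral_spike[OF \<open>negligible S\<close>]) (use that sub in auto)
    then show ?thesis using f[rule_format, OF that] by simp
  qed
  have "((\<lambda>y. f a + integral {a..y} g) has_vector_derivative 0 + g x) (at x within {a..b})"
    by (intro has_vector_derivative_add has_vector_derivative_const
        integral_has_vector_derivative[OF g x])
  then show "(f has_vector_derivative g x) (at x within {a..b})"
    by (intro has_vector_derivative_transform[OF x eq]) simp_all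
qed

lemma continuous_on_nonlocal_rhs:
  assumes "continuous_on S g"
  shows "continuous_on S (\<lambda>x. g x v* (Gc \<omega> - a *\<^sub>R mat 1) - Lfun l N x *\<^sub>R g 0)"
proof -
  have "continuous_on S (\<lambda>x. vec_of_complex (complex_of_vec
      (g x v* (Gc \<omega> - a *\<^sub>R mat 1) - Lfun l N x *\<^sub>R g 0)))"
    unfolding complex_of_vec_nonlocal_rhs
    by (intro continuous_intros continuous_on_Lfun assms
        bounded_linear.continuous_on[OF bounded_linear_vec_of_complex]
        bounded_linear.continuous_on[OF bounded_linear_complex_of_vec])
  then show ?thesis by simp
qed

lemma is_solution_imp_nonlocal_bvp:
  assumes "is_solution a \<tau> \<omega> l N g"
  shows "\<exists>z'. nonlocal_bvp (Complex (- a) \<omega>) (Lfun l N)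
           (complex_of_vec (- (gamma_c v* mexp (- (\<tau> *\<^sub>R Gc \<omega>))))) (\<lambda>x. complex_of_vec (g x)) z'"
proof -
  let ?R = "\<lambda>x. g x v* (Gc \<omega> - a *\<^sub>R mat 1) - Lfun l N x *\<^sub>R g 0"
  obtain g1 g2 where H2: "H2_on01 g g1 g2"
    and ae: "AE x in lebesgue_on {0..1}. g2 x = ?R x"
    and bc: "g1 0 = 0" "g1 1 = - (gamma_c v* mexp (- (\<tau> *\<^sub>R Gc \<omega>)))"
    using assms unfolding is_solution_def by blast
  have gd: "\<forall>x\<in>{0..1}. (g has_vector_derivative g1 x) (at x within {0..1})"
    and gi: "\<forall>x\<in>{0..1}. g1 x = g1 0 + integral {0..x} g2"
    using H2 unfolding H2_on01_def by blast+
  have "continuous_on {0..1} g"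
    using gd by (intro continuous_on_vector_derivative) auto
  then have g1d: "\<forall>x\<in>{0..1}. (g1 has_vector_derivative ?R x) (at x within {0..1})"
    by (intro has_vector_derivative_indefinite_integral_ae[OF gi ae] continuous_on_nonlocal_rhs)
  have "nonlocal_bvp (Complex (- a) \<omega>) (Lfun l N)
      (complex_of_vec (- (gamma_c v* mexp (- (\<tau> *\<^sub>R Gc \<omega>))))) (\<lambda>x. complex_of_vec (g x))
      (\<lambda>x. complex_of_vec (g1 x))"
    unfolding nonlocal_bvp_def
  proof (intro conjI ballI)
    fix x :: real assume "x \<in> {0..1}"
    show "((\<lambda>x. complex_of_vec (g x)) has_vector_derivative complex_of_vec (g1 x))
        (at x within {0..1})"
      using gd \<open>x \<in> {0..1}\<close>
      by (intro bounded_linear.has_vector_derivative[OF bounded_linear_complex_of_vec]) simp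
    have "((\<lambda>x. complex_of_vec (g1 x)) has_vector_derivative complex_of_vec (?R x))
        (at x within {0..1})"
      using g1d \<open>x \<in> {0..1}\<close>
      by (intro bounded_linear.has_vector_derivative[OF bounded_linear_complex_of_vec]) simp
    then show "((\<lambda>x. complex_of_vec (g1 x)) has_vector_derivative
        Complex (- a) \<omega> * complex_of_vec (g x) - of_real (Lfun l N x) * complex_of_vec (g 0))
        (at x within {0..1})"
      by (simp add: complex_of_vec_nonlocal_rhs)
  qed (simp_all add: bc)
  then show ?thesis by blast
qed

lemma nonlocal_bvp_imp_is_solution:
  assumes bvp: "nonlocal_bvp (Complex (- a) \<omega>) (Lfun l N)
      (complex_of_vec (- (gamma_c v* mexp (- (\<tau> *\<^sub>R Gc \<omega>))))) (\<lambda>x. complex_of_vec (g x)) z'"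
  shows "is_solution a \<tau> \<omega> l N g"
proof -
  let ?R = "\<lambda>x. g x v* (Gc \<omega> - a *\<^sub>R mat 1) - Lfun l N x *\<^sub>R g 0"
  define g1 where "g1 x = vec_of_complex (z' x)" for x
  have gd: "\<forall>x\<in>{0..1}. (g has_vector_derivative g1 x) (at x within {0..1})"
  proof
    fix x :: real assume "x \<in> {0..1}"
    then have "((\<lambda>x. vec_of_complex (complex_of_vec (g x))) has_vector_derivative g1 x)
        (at x within {0..1})"
      using bvp unfolding nonlocal_bvp_def g1_def
      by (intro bounded_linear.has_vector_derivative[OF bounded_linear_vec_of_complex]) simp
    then show "(g has_vector_derivative g1 x) (at x within {0..1})" by simp
  qed
  have g1d: "(g1 has_vector_derivative ?R x) (at x within {0..1})" if "x \<in> {0..1}" for x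
  proof -
    have "?R x = vec_of_complex (Complex (- a) \<omega> * complex_of_vec (g x)
        - of_real (Lfun l N x) * complex_of_vec (g 0))"
      by (metis complex_of_vec_nonlocal_rhs vec_of_complex_of_vec)
    then show ?thesis
      using bvp that unfolding nonlocal_bvp_def g1_def[abs_def]
      by (simp add: bounded_linear.has_vector_derivative[OF bounded_linear_vec_of_complex])
  qed
  have "continuous_on {0..1} g"
    using gd by (intro continuous_on_vector_derivative) auto
  then have cont: "continuous_on {0..1} ?R"
    by (rule continuous_on_nonlocal_rhs)
  have "g1 x = g1 0 + integral {0..x} ?R" if "x \<in> {0..1}" for x
  proof -
    have "(?R has_integral g1 x - g1 0) {0..x}"
      using that
      by (intro fundamental_theorem_of_calculus ballI has_vector_derivative_within_subset[OF g1d]) auto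
    then show ?thesis by (simp add: integral_unique)
  qed
  moreover have "?R \<in> borel_measurable (lebesgue_on {0..1})"
    by (rule continuous_imp_measurable_on_sets_lebesgue[OF cont]) simp
  moreover have "integrable (lebesgue_on {0..1}) (\<lambda>x. (norm (?R x))\<^sup>2)"
    by (intro continuous_imp_integrable_real continuous_intros cont)
  ultimately have "H2_on01 g g1 ?R"
    unfolding H2_on01_def using gd by blast
  moreover have "g1 0 = 0" "g1 1 = - (gamma_c v* mexp (- (\<tau> *\<^sub>R Gc \<omega>)))"
    using bvp by (simp_all add: nonlocal_bvp_def g1_def)
  ultimately show ?thesis
    unfolding is_solution_def by auto
qed

lemma lyap_ok_imp_modal_sum_phi_0_ne_1:
  assumes "\<omega> \<noteq> 0" and "0 \<le> \<delta>" and "lyap_ok a N l \<delta> Q"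
  shows "modal_sum (Complex (- a) \<omega>) l N phi 0 \<noteq> 1"
proof
  let ?m = "Complex (- a) \<omega>"
  define x where "x n = of_real (l n) / (?m + of_real ((real n * pi)\<^sup>2))" for n
  assume "modal_sum ?m l N phi 0 = 1"
  then have C: "(\<Sum>j\<le>N. of_real (Cvec j) * x j) = 1"
    by (simp add: modal_sum_def x_def phi_at_0 mult.commute)
  have "\<forall>k\<le>N. (\<Sum>j\<le>N. of_real (ALC a l k j) * x j) = \<i> * of_real \<omega> * x k"
  proof (intro allI impI)
    fix k assume "k \<le> N"
    have "(\<Sum>j\<le>N. of_real (ALC a l k j) * x j)
        = of_real (a - (real k * pi)\<^sup>2) * x k + of_real (l k) * (\<Sum>j\<le>N. of_real (Cvec j) * x j)"
    proof -
      have "(\<Sum>j\<le>N. of_real (Amat a k j) * x j)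
          = (\<Sum>j\<le>N. if j = k then of_real (a - (real k * pi)\<^sup>2) * x k else 0)"
        by (rule sum.cong) (auto simp: Amat_def)
      then show ?thesis
        using \<open>k \<le> N\<close> by (simp add: ALC_def sum.distrib sum_distrib_left distrib_right mult.assoc)
    qed
    also have "\<dots> = (of_real (a - (real k * pi)\<^sup>2) + (?m + of_real ((real k * pi)\<^sup>2))) * x k"
    proof -
      have "?m + of_real ((real k * pi)\<^sup>2) \<noteq> 0"
        using \<open>\<omega> \<noteq> 0\<close> by (intro add_of_real_nonzero_if_Im_nonzero) simp
      then have "of_real (l k) = (?m + of_real ((real k * pi)\<^sup>2)) * x k"
        by (simp add: x_def)
      then show ?thesis
        unfolding C by (simp add: algebra_simps)
    qed
    also have "\<dots> = \<i> * of_real \<omega> * x k"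
      by (simp add: complex_eq_iff)
    finally show "(\<Sum>j\<le>N. of_real (ALC a l k j) * x j) = \<i> * of_real \<omega> * x k" .
  qed
  then have "\<forall>k\<le>N. x k = 0"
    using assms(3) \<open>0 \<le> \<delta>\<close> unfolding lyap_ok_def
    by (intro lyapunov_no_imaginary_eigenvector) auto
  with C show False by simp
qed

theorem lemma2:
  fixes a \<tau> \<omega> \<delta> :: real and N :: nat and l :: "nat \<Rightarrow> real"
    and Q :: "nat \<Rightarrow> nat \<Rightarrow> real"
  assumes "\<tau> > 0" and "\<omega> > 0" and "\<delta> > 0"
    and "\<forall>n>N. a - (real n * pi)^2 < - \<delta>"
    and "lyap_ok a N l \<delta> Q"
  shows "(\<exists>g. is_solution a \<tau> \<omega> l N g) \<and>
         (\<forall>g h. is_solution a \<tau> \<omega> l N g \<and> is_solution a \<tau> \<omega> l N h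
            \<longrightarrow> (\<forall>x\<in>{0..1}. g x = h x))"
proof -
  let ?m = "Complex (- a) \<omega>"
  let ?\<beta> = "complex_of_vec (- (gamma_c v* mexp (- (\<tau> *\<^sub>R Gc \<omega>))))"
  let ?g = "\<lambda>x. vec_of_complex (nonlocal_bvp_sol ?m l N ?\<beta> x)"
  have m: "Im ?m \<noteq> 0"
    using \<open>\<omega> > 0\<close> by simp
  have S: "modal_sum ?m l N phi 0 \<noteq> 1"
    using assms(2,3,5) by (intro lyap_ok_imp_modal_sum_phi_0_ne_1) auto
  obtain z' where "nonlocal_bvp ?m (Lfun l N) ?\<beta> (nonlocal_bvp_sol ?m l N ?\<beta>) z'"
    using nonlocal_bvp_sol_solves[OF m S] ..
  then have "is_solution a \<tau> \<omega> l N ?g"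
    by (intro nonlocal_bvp_imp_is_solution[where z' = z']) simp
  moreover have "g x = ?g x" if "is_solution a \<tau> \<omega> l N g" and "x \<in> {0..1}" for g x
    using nonlocal_bvp_unique[OF m S] is_solution_imp_nonlocal_bvp[OF that(1)] that(2)
    by (metis vec_of_complex_of_vec)
  ultimately show ?thesis by metis
qed

end
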